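(* Consider binary floating-point arithmetic with precision $p\ge 2$ and unit round-off $u=2^{-p}$, all operations correctly rounded to nearest ($\mathrm{RN}$), and assume no underflow or overflow occurs. For floating-point inputs $x,y$, consider the algorithm: if $|x|<|y|$ swap $x$ and $y$; then $r\gets \mathrm{RN}(y/x)$, $t\gets \mathrm{RN}(1+r^2)$, $s\gets\mathrm{RN}(\sqrt t)$, $\rho_2\gets \mathrm{RN}(|x|\cdot s)$. Then the relative error $|\rho_2/\sqrt{x^2+y^2}-1|$ is less than or equal to \[ R_5(u) = \frac{(1+2u)\sqrt{1+u}-1+2u^2}{1+u} \le \frac52 u + \frac38 u^2. \]
   Context: A radix-2 floating-point number of precision $p$ has the form $M\cdot 2^{e-p+1}$ with integers $|M|\le 2^p-1$ and $e_{\min}\le e\le e_{\max}$. $\mathrm{RN}$ is rounding to nearest (ties-to-even). "No underflow or overflow" means all nonzero intermediate results lie in the normal range $[2^{e_{\min}}, (2^p-1)2^{e_{\max}-p+1}]$ in absolute value. *)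

theory Defs
  imports Complex_Main
begin

definition is_float :: "nat \<Rightarrow> int \<Rightarrow> int \<Rightarrow> real \<Rightarrow> bool" where
  "is_float p emin emax x \<longleftrightarrow>
     (\<exists>M e :: int. x = real_of_int M * 2 powr real_of_int (e - int p + 1)
        \<and> \<bar>M\<bar> \<le> 2 ^ p - 1 \<and> emin \<le> e \<and> e \<le> emax)"

text \<open>Unbounded-exponent precision-p floating-point numbers (used for rounding;
  under the no-underflow/no-overflow hypothesis this coincides with the bounded format).\<close>
definition is_fp :: "nat \<Rightarrow> real \<Rightarrow> bool" where
  "is_fp p x \<longleftrightarrow> (\<exists>M e :: int. x = real_of_int M * 2 powr real_of_int e \<and> \<bar>M\<bar> < 2 ^ p)"

definition even_fp :: "nat \<Rightarrow> real \<Rightarrow> bool" where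
  "even_fp p x \<longleftrightarrow> (\<exists>M e :: int. x = real_of_int M * 2 powr real_of_int e
      \<and> 2 ^ (p - 1) \<le> \<bar>M\<bar> \<and> \<bar>M\<bar> < 2 ^ p \<and> even M)"

text \<open>Round to nearest, ties to even.\<close>
definition RN :: "nat \<Rightarrow> real \<Rightarrow> real" where
  "RN p x = (THE f. is_fp p f \<and> (\<forall>g. is_fp p g \<longrightarrow> \<bar>x - f\<bar> \<le> \<bar>x - g\<bar>)
      \<and> ((\<forall>g. is_fp p g \<and> \<bar>x - g\<bar> = \<bar>x - f\<bar> \<longrightarrow> g = f) \<or> even_fp p f))"

definition no_uf_of :: "nat \<Rightarrow> int \<Rightarrow> int \<Rightarrow> real \<Rightarrow> bool" where
  "no_uf_of p emin emax z \<longleftrightarrow> z = 0 \<or>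
     (2 powr real_of_int emin \<le> \<bar>z\<bar> \<and> \<bar>z\<bar> \<le> (2 ^ p - 1) * 2 powr real_of_int (emax - int p + 1))"

definition R5 :: "real \<Rightarrow> real" where
  "R5 u = ((1 + 2*u) * sqrt (1 + u) - 1 + 2*u^2) / (1 + u)"

end

theory Submission
  imports Defs
begin

text \<open>
  Let x' be the input of larger magnitude and z = y'/x', so that
  sqrt (x^2 + y^2) = |x'| sqrt (1 + z^2) with |z| \<le> 1. Rounding to nearest has relative error
  at most u/(1 + u), and absolute error at most u on [-2, 2], where floating-point numbers are at
  most 2u apart. Hence r^2 lies between z^2/(1 + u)^2 and (1 + 2u) z^2, while t and s are within u
  of 1 + r^2 and sqrt t. Two polynomial inequalities in u and sqrt (1 + z^2) turn this into
  m sqrt (1 + z^2) \<le> s \<le> (sqrt (1 + u) + u) sqrt (1 + z^2) with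
  m = 2 + u - 2u^2 - (1 + 2u) sqrt (1 + u), and the last rounding turns these two factors into
  exactly 1 - R5 u and 1 + R5 u.
\<close>

section \<open>Floating-point numbers\<close>

lemma is_fp_uminus_iff [simp]: "is_fp p (- x) \<longleftrightarrow> is_fp p x"
proof -
  have "is_fp p (- x)" if "is_fp p x" for x
    using that unfolding is_fp_def by (metis abs_minus_cancel mult_minus_left of_int_minus)
  from this[of x] this[of "- x"] show ?thesis by auto
qed

lemma even_fp_uminus_iff [simp]: "even_fp p (- x) \<longleftrightarrow> even_fp p x"
proof -
  have "even_fp p (- x)" if "even_fp p x" for x
    using that unfolding even_fp_def by (metis abs_minus_cancel even_minus mult_minus_left of_int_minus)
  from this[of x] this[of "- x"] show ?thesis by auto
qed

lemma is_fp_0: "is_fp p 0"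
  unfolding is_fp_def by (intro exI[of _ 0]) simp

lemma two_powr_int_split:
  fixes e E :: int assumes "E \<le> e"
  shows "(2::real) powr e = of_int (2 ^ nat (e - E)) * 2 powr E"
proof -
  have "(2::real) powr e = 2 powr (e - E) * 2 powr E" by (simp flip: powr_add)
  also have "(2::real) powr (e - E) = 2 ^ nat (e - E)"
    using assms by (simp flip: powr_realpow)
  finally show ?thesis by simp
qed

lemma is_fp_scaled_int:
  fixes N e :: int assumes "p \<ge> 1" "\<bar>N\<bar> \<le> 2 ^ p"
  shows "is_fp p (of_int N * 2 powr e)"
proof (cases "\<bar>N\<bar> < 2 ^ p")
  case True
  then show ?thesis unfolding is_fp_def by blast
next
  case False
  with assms have "\<bar>N\<bar> = 2 * 2 ^ (p - 1)"
    by (simp flip: power_Suc)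
  then have "even N" by (metis dvd_abs_iff dvd_triv_left)
  then obtain K where K: "N = 2 * K" by (elim evenE)
  with \<open>\<bar>N\<bar> = 2 * 2 ^ (p - 1)\<close> have "\<bar>K\<bar> = 2 ^ (p - 1)" by (simp add: abs_mult)
  then have "\<bar>K\<bar> < 2 ^ p" using assms(1) by simp
  moreover have "of_int N * 2 powr e = of_int K * (2::real) powr (e + 1)"
    using K(1) by (simp add: powr_add)
  ultimately show ?thesis unfolding is_fp_def by blast
qed

lemma is_fp_1: "1 \<le> p \<Longrightarrow> is_fp p 1"
  using is_fp_scaled_int[of p 1 0] by simp

lemma normalized_significand_unique:
  fixes M M' e e' :: int
  assumes eq: "of_int M * 2 powr e = (of_int M' * 2 powr e' :: real)"
    and "2 ^ (p - 1) \<le> \<bar>M\<bar>" "\<bar>M\<bar> < 2 ^ p" "2 ^ (p - 1) \<le> \<bar>M'\<bar>" "\<bar>M'\<bar> < 2 ^ p" "p \<ge> 1"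
  shows "M = M'"
proof -
  have exp_le: "e \<le> e'"
    if "of_int M * 2 powr e = (of_int M' * 2 powr e' :: real)" "2 ^ (p - 1) \<le> \<bar>M\<bar>" "\<bar>M'\<bar> < 2 ^ p"
    for M M' e e' :: int
  proof (rule ccontr)
    assume "\<not> e \<le> e'"
    then have "e' \<le> e" and "nat (e - e') \<ge> 1" by auto
    with that(1) have "(of_int (M * 2 ^ nat (e - e')) :: real) = of_int M'"
      using two_powr_int_split[of e' e] by simp
    then have "M * 2 ^ nat (e - e') = M'" by (rule of_int_eq_iff[THEN iffD1])
    moreover have two_le: "(2::int) \<le> 2 ^ nat (e - e')"
      using power_increasing[OF \<open>nat (e - e') \<ge> 1\<close>, of "2::int"] by simp
    ultimately have "\<bar>M'\<bar> \<ge> \<bar>M\<bar> * 2"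
      using mult_left_mono[OF two_le abs_ge_zero[of M]] by (simp add: abs_mult)
    moreover have "(2::int) ^ p = 2 ^ (p - 1) * 2"
      using \<open>p \<ge> 1\<close> by (simp flip: power_Suc2)
    ultimately show False using that by linarith
  qed
  have "e = e'" using exp_le[of M e M' e'] exp_le[of M' e' M e] assms by fastforce
  with eq show ?thesis by simp
qed

lemma even_fp_normalized_iff:
  fixes m E :: int
  assumes "2 ^ (p - 1) \<le> m" "m < 2 ^ p" "p \<ge> 1"
  shows "even_fp p (of_int m * 2 powr E) \<longleftrightarrow> even m"
proof -
  have m: "2 ^ (p - 1) \<le> \<bar>m\<bar>" "\<bar>m\<bar> < 2 ^ p" "\<bar>m\<bar> = m"
    using assms zero_less_power[of "2::int" "p - 1"] by linarith+
  show ?thesis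
  proof
    assume "even_fp p (of_int m * 2 powr E)"
    then obtain M e :: int where "of_int m * 2 powr E = (of_int M * 2 powr e :: real)"
      "2 ^ (p - 1) \<le> \<bar>M\<bar>" "\<bar>M\<bar> < 2 ^ p" "even M"
      unfolding even_fp_def by blast
    with m assms(3) show "even m"
      using normalized_significand_unique[of m E M e p] by auto
  next
    assume "even m"
    with m show "even_fp p (of_int m * 2 powr E)"
      unfolding even_fp_def by auto
  qed
qed

lemma exists_binade:
  fixes x :: real assumes "x > 0" "p \<ge> 1"
  obtains E :: int where "2 ^ (p - 1) * 2 powr E \<le> x" "x < 2 ^ p * 2 powr E"
proof
  define n where "n = \<lfloor>log 2 x\<rfloor>"
  define E where "E = n - int p + 1"
  have "2 powr n \<le> x" "x < 2 powr (n + 1)"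
    unfolding n_def using assms(1)
    by (simp_all add: le_log_iff[symmetric] log_less_iff[symmetric])
  moreover have "(2::real) powr n = 2 ^ (p - 1) * 2 powr E" "(2::real) powr (n + 1) = 2 ^ p * 2 powr E"
    unfolding E_def using assms(2) by (simp_all add: powr_realpow[symmetric] powr_add[symmetric])
  ultimately show "2 ^ (p - 1) * 2 powr E \<le> x" "x < 2 ^ p * 2 powr E" by simp_all
qed

lemma no_fp_strictly_between:
  fixes m E :: int
  assumes "2 ^ (p - 1) \<le> m" "is_fp p g"
  shows "g \<le> of_int m * 2 powr E \<or> of_int (m + 1) * 2 powr E \<le> g"
proof -
  obtain M e :: int where g: "g = of_int M * 2 powr e" "\<bar>M\<bar> < 2 ^ p"
    using assms(2) unfolding is_fp_def by blast
  show ?thesis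
  proof (cases "e < E")
    case True
    have "(2::int) ^ p \<le> 2 * 2 ^ (p - 1)"
      by (cases p) simp_all
    with g(2) assms(1) have "of_int \<bar>M\<bar> \<le> (2 * of_int m :: real)"
      by linarith
    moreover have "(2::real) powr e \<le> 2 powr (E - 1)"
      using True by (intro powr_mono) auto
    then have "(2::real) powr e \<le> 2 powr E / 2"
      by (simp add: powr_diff)
    ultimately have "\<bar>g\<bar> \<le> 2 * of_int m * (2 powr E / 2)"
      unfolding g(1) abs_mult by (intro mult_mono) auto
    then show ?thesis by (simp add: abs_le_iff)
  next
    case False
    define K where "K = M * 2 ^ nat (e - E)"
    have "g = of_int K * 2 powr E"
      unfolding K_def g(1) using False two_powr_int_split[of E e] by simp
    moreover have "K \<le> m \<or> m + 1 \<le> K"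
      by linarith
    ultimately show ?thesis
      by (metis mult_right_mono of_int_le_iff powr_ge_zero)
  qed
qed

lemma even_fp_consecutive:
  fixes m E :: int
  assumes "2 \<le> p" "2 ^ (p - 1) \<le> m" "m < 2 ^ p"
  shows "even_fp p (of_int m * 2 powr E) \<noteq> even_fp p (of_int (m + 1) * 2 powr E)"
proof (cases "m + 1 < 2 ^ p")
  case True
  then show ?thesis
    using assms even_fp_normalized_iff[of p m E] even_fp_normalized_iff[of p "m + 1" E] by simp
next
  case False
  \<comment> \<open>Here 2 \<le> p is needed: for p = 1 both neighbours 2^E and 2^(E + 1) have the odd
    significand 1.\<close>
  with assms(3) have m: "m + 1 = 2 * 2 ^ (p - 1)"
    using assms(1) by (simp flip: power_Suc)
  then have "odd m"
    by (metis even_add even_mult_iff even_numeral odd_one)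
  moreover have "of_int (m + 1) * 2 powr E = of_int (2 ^ (p - 1)) * (2::real) powr (E + 1)"
    unfolding m by (simp add: powr_add)
  moreover have "even ((2::int) ^ (p - 1))"
    using assms(1) by simp
  ultimately show ?thesis
    using assms even_fp_normalized_iff[of p m E] even_fp_normalized_iff[of p "2 ^ (p - 1)" "E + 1"]
    by simp
qed

lemma fp_neighbours:
  fixes x :: real
  assumes "2 \<le> p" "x \<noteq> 0"
  obtains a b where "is_fp p a" "is_fp p b" "a \<le> x" "x \<le> b"
    "\<And>g. is_fp p g \<Longrightarrow> g \<le> a \<or> b \<le> g" "even_fp p a \<noteq> even_fp p b"
proof -
  have pos: "\<exists>a b. is_fp p a \<and> is_fp p b \<and> a \<le> x \<and> x \<le> b
      \<and> (\<forall>g. is_fp p g \<longrightarrow> g \<le> a \<or> b \<le> g) \<and> even_fp p a \<noteq> even_fp p b"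
    if "x > 0" for x :: real
  proof -
    obtain E :: int where E: "2 ^ (p - 1) * 2 powr E \<le> x" "x < 2 ^ p * 2 powr E"
      using exists_binade[OF \<open>x > 0\<close>, of p] assms(1) by auto
    define m where "m = \<lfloor>x / 2 powr E\<rfloor>"
    have "2 ^ (p - 1) \<le> x / 2 powr E" "x / 2 powr E < 2 ^ p"
      using E by (simp_all add: pos_le_divide_eq pos_divide_less_eq)
    then have m: "2 ^ (p - 1) \<le> m" "m < 2 ^ p"
      unfolding m_def by (simp_all add: le_floor_iff floor_less_iff)
    have "of_int m \<le> x / 2 powr E" "x / 2 powr E \<le> of_int (m + 1)"
      unfolding m_def by linarith+
    then have "of_int m * 2 powr E \<le> x" "x \<le> of_int (m + 1) * 2 powr E"
      by (simp_all add: pos_le_divide_eq pos_divide_le_eq)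
    moreover have "\<bar>m\<bar> \<le> 2 ^ p" "\<bar>m + 1\<bar> \<le> 2 ^ p"
      using m zero_less_power[of "2::int" "p - 1"] by linarith+
    then have "is_fp p (of_int m * 2 powr E)" "is_fp p (of_int (m + 1) * 2 powr E)"
      using assms(1) is_fp_scaled_int[of p m E] is_fp_scaled_int[of p "m + 1" E] by simp_all
    ultimately show ?thesis
      using no_fp_strictly_between[OF m(1)] even_fp_consecutive[OF assms(1) m] by blast
  qed
  show ?thesis
  proof (cases "x > 0")
    case True
    then show ?thesis using pos that by blast
  next
    case False
    with assms(2) obtain a b where "is_fp p a" "is_fp p b" "a \<le> - x" "- x \<le> b"
      "\<forall>g. is_fp p g \<longrightarrow> g \<le> a \<or> b \<le> g" "even_fp p a \<noteq> even_fp p b"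
      using pos[of "- x"] by auto
    then show ?thesis
      using that[of "- b" "- a"] by (metis is_fp_uminus_iff even_fp_uminus_iff minus_le_iff le_minus_iff)
  qed
qed

section \<open>Round to nearest\<close>

definition fp_nearest :: "nat \<Rightarrow> real \<Rightarrow> real \<Rightarrow> bool" where
  "fp_nearest p x f \<longleftrightarrow> is_fp p f \<and> (\<forall>g. is_fp p g \<longrightarrow> \<bar>x - f\<bar> \<le> \<bar>x - g\<bar>)"

lemma fp_nearest_iff_tie:
  assumes "fp_nearest p x f"
  shows "fp_nearest p x g \<longleftrightarrow> is_fp p g \<and> \<bar>x - g\<bar> = \<bar>x - f\<bar>"
  using assms unfolding fp_nearest_def by (auto intro: order_antisym)

lemma RN_eq_The_fp_nearest:
  "RN p x = (THE f. fp_nearest p x f \<and> ((\<forall>g. fp_nearest p x g \<longrightarrow> g = f) \<or> even_fp p f))"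
proof -
  have "(is_fp p f \<and> (\<forall>g. is_fp p g \<longrightarrow> \<bar>x - f\<bar> \<le> \<bar>x - g\<bar>)
      \<and> ((\<forall>g. is_fp p g \<and> \<bar>x - g\<bar> = \<bar>x - f\<bar> \<longrightarrow> g = f) \<or> even_fp p f))
    \<longleftrightarrow> fp_nearest p x f \<and> ((\<forall>g. fp_nearest p x g \<longrightarrow> g = f) \<or> even_fp p f)" for f
    using fp_nearest_iff_tie[of p x f] unfolding fp_nearest_def[of p x f] by auto
  then show ?thesis
    unfolding RN_def by simp
qed

lemma ex1_tie_break:
  assumes "N a \<or> N b" "\<And>f. N f \<Longrightarrow> f = a \<or> f = b" "E a \<noteq> E b"
  shows "\<exists>!f. N f \<and> ((\<forall>g. N g \<longrightarrow> g = f) \<or> E f)"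
proof (cases "N a \<and> N b")
  case True
  with assms(3) have "a \<noteq> b" by blast
  with True assms(2,3) show ?thesis by (cases "E a") blast+
next
  case False
  with assms(1,2) obtain c where "N c" "\<And>f. N f \<Longrightarrow> f = c" by blast
  then show ?thesis by blast
qed

lemma fp_nearest_neighbours:
  assumes "is_fp p a" "is_fp p b" "a \<le> x" "x \<le> b" "\<And>g. is_fp p g \<Longrightarrow> g \<le> a \<or> b \<le> g"
  shows "fp_nearest p x a \<or> fp_nearest p x b" "fp_nearest p x f \<Longrightarrow> f = a \<or> f = b"
proof -
  have far: "min (x - a) (b - x) \<le> \<bar>x - g\<bar>" if "is_fp p g" for g
    using assms(3,4) assms(5)[OF that] by (auto simp: abs_if min_def)
  show "fp_nearest p x a \<or> fp_nearest p x b"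
    unfolding fp_nearest_def using assms(1-4) far by (smt (verit))
  show "f = a \<or> f = b" if "fp_nearest p x f"
  proof -
    from that have "is_fp p f" "\<bar>x - f\<bar> \<le> x - a" "\<bar>x - f\<bar> \<le> b - x"
      using assms(1-4) unfolding fp_nearest_def by force+
    then show ?thesis using assms(5) by fastforce
  qed
qed

lemma RN_fp_nearest:
  assumes "2 \<le> p" shows "fp_nearest p x (RN p x)"
proof -
  have "\<exists>!f. fp_nearest p x f \<and> ((\<forall>g. fp_nearest p x g \<longrightarrow> g = f) \<or> even_fp p f)"
  proof (cases "x = 0")
    case True
    then have "fp_nearest p x f \<longleftrightarrow> f = 0" for f
      using is_fp_0 unfolding fp_nearest_def by fastforce
    then show ?thesis by auto
  next
    case False
    obtain a b where "is_fp p a" "is_fp p b" "a \<le> x" "x \<le> b"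
      "\<And>g. is_fp p g \<Longrightarrow> g \<le> a \<or> b \<le> g" "even_fp p a \<noteq> even_fp p b"
      using fp_neighbours[OF assms False] by blast
    then show ?thesis
      by (intro ex1_tie_break fp_nearest_neighbours)
  qed
  then show ?thesis
    unfolding RN_eq_The_fp_nearest by (rule theI'[THEN conjunct1])
qed

lemma RN_error_le:
  assumes "2 \<le> p" "is_fp p g" "\<bar>x - g\<bar> \<le> d"
  shows "\<bar>RN p x - x\<bar> \<le> d"
  using RN_fp_nearest[OF assms(1), of x] assms(2,3) unfolding fp_nearest_def by force

lemma RN_le_fp:
  assumes "2 \<le> p" "is_fp p g" "x \<le> g"
  shows "RN p x \<le> g"
  using RN_fp_nearest[OF assms(1), of x] assms(2,3) unfolding fp_nearest_def by force

lemma fp_le_RN: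
  assumes "2 \<le> p" "is_fp p g" "g \<le> x"
  shows "g \<le> RN p x"
  using RN_fp_nearest[OF assms(1), of x] assms(2,3) unfolding fp_nearest_def by force

lemma RN_nonneg: "2 \<le> p \<Longrightarrow> 0 \<le> x \<Longrightarrow> 0 \<le> RN p x"
  using fp_le_RN is_fp_0 by blast

definition unit_roundoff :: "nat \<Rightarrow> real" where
  "unit_roundoff p = 2 powr - real p"

lemma unit_roundoff_bounds:
  assumes "2 \<le> p" shows "0 < unit_roundoff p" "unit_roundoff p \<le> 1/4"
proof -
  show "0 < unit_roundoff p"
    unfolding unit_roundoff_def by simp
  have "(2::real) powr - real p \<le> 2 powr - 2"
    using assms by (intro powr_mono) auto
  then show "unit_roundoff p \<le> 1/4"
    unfolding unit_roundoff_def by (simp add: powr_minus_divide)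
qed

lemma exists_fp_abs_error:
  fixes e :: int
  assumes "1 \<le> p" "\<bar>x\<bar> \<le> 2 powr (e + int p)"
  shows "\<exists>g. is_fp p g \<and> \<bar>x - g\<bar> \<le> 2 powr (e - 1)"
proof -
  define P :: real where "P = 2 powr e"
  define N where "N = \<lfloor>x / P + 1/2\<rfloor>"
  have "P > 0" unfolding P_def by simp
  have "(2::real) powr (e + int p) = 2 ^ p * P"
    unfolding P_def by (simp add: powr_add powr_realpow)
  with assms(2) \<open>P > 0\<close> have "- (2 ^ p) \<le> x / P" "x / P \<le> 2 ^ p"
    by (simp_all add: abs_le_iff pos_le_divide_eq pos_divide_le_eq)
  then have "- (2 ^ p) \<le> N" "N \<le> 2 ^ p"
    unfolding N_def by (simp_all add: le_floor_iff floor_le_iff)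
  then have "\<bar>N\<bar> \<le> 2 ^ p" by linarith
  have err: "\<bar>x / P - N\<bar> \<le> 1/2"
    unfolding N_def by linarith
  from \<open>\<bar>N\<bar> \<le> 2 ^ p\<close> have "is_fp p (of_int N * P)"
    unfolding P_def using assms(1) by (rule is_fp_scaled_int[rotated])
  moreover have "\<bar>x - of_int N * P\<bar> = \<bar>x / P - N\<bar> * P"
    using \<open>P > 0\<close> by (simp add: abs_mult_pos' field_simps flip: abs_mult)
  moreover have "\<bar>x / P - N\<bar> * P \<le> 2 powr (e - 1)"
    using mult_right_mono[OF err, of P] \<open>P > 0\<close> unfolding P_def by (simp add: powr_diff)
  ultimately show ?thesis by auto
qed

lemma RN_abs_error_le_unit_roundoff:
  assumes "2 \<le> p" "\<bar>x\<bar> \<le> 2"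
  shows "\<bar>RN p x - x\<bar> \<le> unit_roundoff p"
  using exists_fp_abs_error[of p x "1 - int p"] assms RN_error_le
  unfolding unit_roundoff_def by fastforce

lemma exists_fp_rel_error:
  assumes "1 \<le> p"
  shows "\<exists>g. is_fp p g \<and> \<bar>x - g\<bar> \<le> \<bar>x\<bar> / (2 ^ p + 1)"
proof -
  have pos: "\<exists>g. is_fp p g \<and> \<bar>x - g\<bar> \<le> x / (2 ^ p + 1)" if "x > 0" for x :: real
  proof -
    obtain E :: int where E: "2 ^ (p - 1) * 2 powr E \<le> x" "x < 2 ^ p * 2 powr E"
      using exists_binade[OF \<open>x > 0\<close> assms] by blast
    define P :: real where "P = 2 powr E"
    define V :: real where "V = 2 ^ (p - 1)"
    have "P > 0" "V > 0" unfolding P_def V_def by simp_all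
    have "(2::real) ^ p = 2 * V"
      unfolding V_def using assms by (simp flip: power_Suc)
    show ?thesis
    proof (cases "(V + 1/2) * P \<le> x")
      case True
      have "\<bar>x\<bar> \<le> 2 powr (E + int p)"
        using E(2) \<open>x > 0\<close> by (simp add: powr_add powr_realpow mult.commute)
      then obtain g where "is_fp p g" "\<bar>x - g\<bar> \<le> P / 2"
        using exists_fp_abs_error[OF assms] unfolding P_def by (fastforce simp: powr_diff)
      moreover have "P / 2 \<le> x / (2 ^ p + 1)"
        using True \<open>(2::real) ^ p = 2 * V\<close> \<open>V > 0\<close> by (simp add: field_simps)
      ultimately show ?thesis by (blast intro: order_trans)
    next
      case False
      have "is_fp p (V * P)"
        using is_fp_scaled_int[OF assms, of "2 ^ (p - 1)" E] unfolding V_def P_def by simp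
      have "V * (2 * x) \<le> V * (P * (2 * V + 1))"
        using False \<open>V > 0\<close> by (intro mult_left_mono) (simp_all add: algebra_simps)
      then have "(x - V * P) * (2 ^ p + 1) \<le> x"
        using \<open>(2::real) ^ p = 2 * V\<close> by (simp add: algebra_simps)
      moreover have "V * P \<le> x"
        using E(1) unfolding V_def P_def .
      ultimately have "\<bar>x - V * P\<bar> \<le> x / (2 ^ p + 1)"
        by (simp add: pos_le_divide_eq add_pos_pos)
      with \<open>is_fp p (V * P)\<close> show ?thesis by blast
    qed
  qed
  consider "x > 0" | "x = 0" | "x < 0" by linarith
  then show ?thesis
  proof cases
    case 1
    then show ?thesis using pos by auto
  next
    case 2
    then show ?thesis using is_fp_0 by auto
  next
    case 3
    then obtain g where "is_fp p g" "\<bar>- x - g\<bar> \<le> - x / (2 ^ p + 1)"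
      using pos[of "- x"] by auto
    then show ?thesis
      using 3 by (intro exI[of _ "- g"]) (simp add: abs_minus_commute)
  qed
qed

lemma RN_rel_error_le_unit_roundoff:
  assumes "2 \<le> p"
  defines "u \<equiv> unit_roundoff p"
  shows "\<bar>RN p x - x\<bar> \<le> u / (1 + u) * \<bar>x\<bar>"
proof -
  have "u / (1 + u) * \<bar>x\<bar> = \<bar>x\<bar> / (2 ^ p + 1)"
    unfolding u_def unit_roundoff_def by (simp add: powr_minus_divide powr_realpow field_simps)
  then show ?thesis
    using exists_fp_rel_error[of p x] assms(1) RN_error_le by auto
qed

section \<open>Inequalities in the unit roundoff\<close>

lemma sqrt_one_plus_ge:
  fixes u :: real assumes "0 \<le> u" "u \<le> 1"
  shows "1 + 1/2*u - 1/8*u^2 \<le> sqrt (1 + u)"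
proof (rule real_le_rsqrt)
  have "u^4 \<le> u^3" "0 \<le> u^3"
    using assms power_decreasing[of 3 4 u] by simp_all
  moreover have "(1 + 1/2*u - 1/8*u^2)^2 = 1 + u - 1/8*u^3 + 1/64*u^4"
    by algebra
  ultimately show "(1 + 1/2*u - 1/8*u^2)^2 \<le> 1 + u"
    by linarith
qed

lemma sqrt_one_plus_le:
  fixes u :: real assumes "0 \<le> u" "u \<le> 1"
  shows "sqrt (1 + u) \<le> 1 + 1/2*u - 1/8*u^2 + 1/16*u^3"
proof (rule real_le_lsqrt)
  have powers: "u^2 \<le> u" "u^5 \<le> u^4" "0 \<le> u^3" "0 \<le> u^4" "0 \<le> u^6"
    using assms power_decreasing[of 1 2 u] power_decreasing[of 4 5 u] by simp_all
  then show "0 \<le> 1 + 1/2*u - 1/8*u^2 + 1/16*u^3"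
    using assms by linarith
  have "(1 + 1/2*u - 1/8*u^2 + 1/16*u^3)^2 = 1 + u + 5/64*u^4 - 1/64*u^5 + 1/256*u^6"
    by algebra
  with powers show "1 + u \<le> (1 + 1/2*u - 1/8*u^2 + 1/16*u^3)^2"
    by linarith
qed

lemma R5_le:
  assumes "0 \<le> u" "u \<le> 1"
  shows "R5 u \<le> 5/2 * u + 3/8 * u^2"
proof -
  have "(1 + 2*u) * sqrt (1 + u) \<le> (1 + 2*u) * (1 + 1/2*u - 1/8*u^2 + 1/16*u^3)"
    using sqrt_one_plus_le[OF assms] assms by (intro mult_left_mono) auto
  moreover have "u^4 \<le> u^3" "0 \<le> u^3"
    using assms power_decreasing[of 3 4 u] by simp_all
  moreover have "(5/2 * u + 3/8 * u^2) * (1 + u)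
      - ((1 + 2*u) * (1 + 1/2*u - 1/8*u^2 + 1/16*u^3) - 1 + 2*u^2) = 9/16 * u^3 - 1/8 * u^4"
    by algebra
  ultimately have "(1 + 2*u) * sqrt (1 + u) - 1 + 2*u^2 \<le> (5/2 * u + 3/8 * u^2) * (1 + u)"
    by linarith
  then show ?thesis
    unfolding R5_def using assms by (simp add: pos_divide_le_eq)
qed

lemma R5_upper_eq:
  fixes u :: real assumes "0 \<le> u"
  shows "(sqrt (1 + u) + u) * (1 + u / (1 + u)) = 1 + R5 u"
  unfolding R5_def using assms by (simp add: field_simps) (simp add: algebra_simps power2_eq_square)

lemma R5_lower_eq:
  fixes u :: real assumes "0 \<le> u"
  shows "(2 + u - 2*u^2 - (1 + 2*u) * sqrt (1 + u)) * (1 - u / (1 + u)) = 1 - R5 u"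
  unfolding R5_def using assms by (simp add: field_simps)

lemma sqrt_perturbed_le:
  fixes u b :: real assumes "0 \<le> u" "0 \<le> b"
  shows "sqrt (1 + (1 + 2*u) * b + u) + u \<le> sqrt (1 + b) * (sqrt (1 + u) + u)"
proof -
  define c where "c = sqrt (1 + u)"
  define h where "h = sqrt (1 + b)"
  have "1 \<le> c" "c^2 = 1 + u" "1 \<le> h" "h^2 = 1 + b"
    unfolding c_def h_def using assms by simp_all
  have "(h * (c + u) - u)^2 - (1 + (1 + 2*u) * b + u)
      = (h - 1) * ((h + 1) * (u * (2*c + u - 1)) - 2*u*(c + u))"
    using \<open>c^2 = 1 + u\<close> \<open>h^2 = 1 + b\<close> by algebra
  moreover have "2 * (u * (c + u)) \<le> (h + 1) * (u * (2*c + u - 1))"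
    using \<open>1 \<le> c\<close> \<open>1 \<le> h\<close> assms by (intro mult_mono) (auto simp: algebra_simps)
  then have "0 \<le> (h - 1) * ((h + 1) * (u * (2*c + u - 1)) - 2*u*(c + u))"
    using \<open>1 \<le> h\<close> by simp
  ultimately have "1 + (1 + 2*u) * b + u \<le> (h * (c + u) - u)^2"
    by linarith
  moreover have "c + u \<le> h * (c + u)"
    using \<open>1 \<le> c\<close> \<open>1 \<le> h\<close> assms by simp
  moreover have "0 \<le> h * (c + u) - u"
    using \<open>c + u \<le> h * (c + u)\<close> \<open>1 \<le> c\<close> by linarith
  ultimately have "sqrt (1 + (1 + 2*u) * b + u) \<le> h * (c + u) - u"
    by (intro real_le_lsqrt)
  then show ?thesis
    unfolding c_def h_def by simp
qed

lemma sqrt_perturbed_ge_poly: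
  fixes u b :: real assumes "0 \<le> u" "u \<le> 1/4" "0 \<le> b"
  shows "(1 - 3/2*u - 23/8*u^2 + 1/4*u^3) * sqrt (1 + b) \<le> sqrt (1 + b / (1 + u)^2 - u) - u"
proof -
  define M where "M = 1 - 3/2*u - 23/8*u^2 + 1/4*u^3"
  define h where "h = sqrt (1 + b)"
  have "1 \<le> h" "h^2 = 1 + b"
    unfolding h_def using assms(3) by simp_all
  have powers: "u^2 \<le> 1/16" "u^3 \<le> 1/64" "u^4 \<le> 1/256" "u^5 \<le> 1/1024" "u^6 \<le> 1/4096"
      "u^7 \<le> 1/16384"
    using power_mono[OF assms(2), of 2] power_mono[OF assms(2), of 3] power_mono[OF assms(2), of 4]
      power_mono[OF assms(2), of 5] power_mono[OF assms(2), of 6] power_mono[OF assms(2), of 7] assms(1)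
    by (auto simp: power_divide)
  have nonneg: "0 \<le> u^2" "0 \<le> u^3" "0 \<le> u^4" "0 \<le> u^5" "0 \<le> u^6" "0 \<le> u^7"
    using assms(1) by simp_all
  \<comment> \<open>Expand the difference of the squares in powers of h - 1; the coefficients are
    nonnegative for u \<le> 1/4.\<close>
  define a0 where "a0 = 11/2 + 61/8*u - 593/64*u^2 - 575/32*u^3 - 333/64*u^4 + 21/16*u^5 - 1/16*u^6"
  define a1 where "a1 = 16 + 23/2*u - 977/32*u^2 - 651/16*u^3 - 317/32*u^4 + 21/8*u^5 - 1/8*u^6"
  define a2 where "a2 = 1 + 17/2*u + 7/8*u^2 - 1425/64*u^3 - 727/32*u^4 - 301/64*u^5 + 21/16*u^6
      - 1/16*u^7"
  have "0 \<le> a0" "0 \<le> a1" "0 \<le> a2"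
    unfolding a0_def a1_def a2_def using powers nonneg assms(1) by linarith+
  then have "0 \<le> u^2*a0 + u^2*a1*(h - 1) + u*a2*(h - 1)^2"
    using \<open>1 \<le> h\<close> assms(1) by simp
  also have "u^2*a0 + u^2*a1*(h - 1) + u*a2*(h - 1)^2
      = (1 - u)*(1 + u)^2 + h^2 - 1 - (1 + u)^2 * (M * h + u)^2"
    unfolding a0_def a1_def a2_def M_def by algebra
  finally have "(M * h + u)^2 * (1 + u)^2 \<le> (1 - u)*(1 + u)^2 + b"
    using \<open>h^2 = 1 + b\<close> by (simp add: mult.commute)
  then have "(M * h + u)^2 \<le> ((1 - u)*(1 + u)^2 + b) / (1 + u)^2"
    using assms(1) by (simp add: pos_le_divide_eq)
  also have "\<dots> = 1 + b / (1 + u)^2 - u"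
    using assms(1) by (simp add: field_simps)
  finally have "(M * h + u)^2 \<le> 1 + b / (1 + u)^2 - u" .
  moreover have "0 \<le> M"
    unfolding M_def using powers nonneg assms(1,2) by linarith
  then have "0 \<le> M * h + u"
    using \<open>1 \<le> h\<close> assms(1) by simp
  ultimately have "M * h + u \<le> sqrt (1 + b / (1 + u)^2 - u)"
    by (intro real_le_rsqrt)
  then show ?thesis
    unfolding M_def h_def by linarith
qed

lemma sqrt_perturbed_ge:
  fixes u b :: real assumes "0 \<le> u" "u \<le> 1/4" "0 \<le> b"
  shows "(2 + u - 2*u^2 - (1 + 2*u) * sqrt (1 + u)) * sqrt (1 + b)
    \<le> sqrt (1 + b / (1 + u)^2 - u) - u"
proof -
  have "(1 + 2*u) * (1 + 1/2*u - 1/8*u^2) \<le> (1 + 2*u) * sqrt (1 + u)"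
    using sqrt_one_plus_ge[of u] assms by (intro mult_left_mono) auto
  moreover have "(1 + 2*u) * (1 + 1/2*u - 1/8*u^2) = 1 + 5/2*u + 7/8*u^2 - 1/4*u^3"
    by algebra
  ultimately have "2 + u - 2*u^2 - (1 + 2*u) * sqrt (1 + u) \<le> 1 - 3/2*u - 23/8*u^2 + 1/4*u^3"
    by linarith
  then have "(2 + u - 2*u^2 - (1 + 2*u) * sqrt (1 + u)) * sqrt (1 + b)
      \<le> (1 - 3/2*u - 23/8*u^2 + 1/4*u^3) * sqrt (1 + b)"
    using assms(3) by (intro mult_right_mono) auto
  also have "\<dots> \<le> sqrt (1 + b / (1 + u)^2 - u) - u"
    using sqrt_perturbed_ge_poly[OF assms] .
  finally show ?thesis .
qed

section \<open>Error analysis of the algorithm\<close>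

lemma RN_square_bounds:
  assumes "2 \<le> p" "\<bar>z\<bar> \<le> 1"
  defines "u \<equiv> unit_roundoff p"
  shows "z^2 / (1 + u)^2 \<le> (RN p z)^2" "(RN p z)^2 \<le> (1 + 2*u) * z^2" "(RN p z)^2 \<le> 1"
proof -
  define w where "w = u / (1 + u)"
  have "0 < u" "u \<le> 1/4"
    unfolding u_def using unit_roundoff_bounds[OF assms(1)] by simp_all
  then have "0 \<le> w" "w \<le> u" "1 - w = 1 / (1 + u)" "u - w = u * w"
    unfolding w_def by (simp_all add: field_simps)
  have err: "\<bar>RN p z - z\<bar> \<le> w * \<bar>z\<bar>"
    unfolding w_def u_def using RN_rel_error_le_unit_roundoff[OF assms(1)] .
  have "is_fp p 1" "is_fp p (- 1)"
    using assms(1) is_fp_1 by simp_all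
  then have "\<bar>RN p z\<bar> \<le> 1"
    using assms(1,2) RN_le_fp[of p 1 z] fp_le_RN[of p "- 1" z] by (simp add: abs_le_iff)
  then show "(RN p z)^2 \<le> 1"
    by (simp add: abs_square_le_1)
  have "(1 - w) * \<bar>z\<bar> \<le> \<bar>RN p z\<bar>"
    using err by (simp add: algebra_simps)
  then have "((1 - w) * \<bar>z\<bar>)^2 \<le> \<bar>RN p z\<bar>^2"
    using \<open>w \<le> u\<close> \<open>u \<le> 1/4\<close> by (intro power_mono) auto
  then show "z^2 / (1 + u)^2 \<le> (RN p z)^2"
    using \<open>1 - w = 1 / (1 + u)\<close> by (simp add: power_mult_distrib power_divide)
  have "\<bar>RN p z\<bar> \<le> (1 + w) * \<bar>z\<bar>"
    using err by (simp add: algebra_simps)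
  have "(1 + w)^2 \<le> 1 + 2*u"
  proof -
    have "w * w \<le> 2 * u * w"
      using \<open>w \<le> u\<close> \<open>0 \<le> w\<close> \<open>0 < u\<close> by (intro mult_right_mono) auto
    then show ?thesis
      using \<open>u - w = u * w\<close> by (simp add: power2_eq_square algebra_simps)
  qed
  have "(RN p z)^2 = \<bar>RN p z\<bar>^2"
    by simp
  also have "\<dots> \<le> ((1 + w) * \<bar>z\<bar>)^2"
    using \<open>\<bar>RN p z\<bar> \<le> (1 + w) * \<bar>z\<bar>\<close> by (intro power_mono) simp_all
  also have "\<dots> = (1 + w)^2 * z^2"
    by (simp add: power_mult_distrib)
  also have "\<dots> \<le> (1 + 2*u) * z^2"
    using \<open>(1 + w)^2 \<le> 1 + 2*u\<close> by (intro mult_right_mono) simp_all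
  finally show "(RN p z)^2 \<le> (1 + 2*u) * z^2" .
qed

lemma RN_sqrt_RN_one_plus_bounds:
  assumes "2 \<le> p" "0 \<le> a" "a \<le> 1"
  defines "u \<equiv> unit_roundoff p"
  shows "sqrt (1 + a - u) - u \<le> RN p (sqrt (RN p (1 + a)))"
    "RN p (sqrt (RN p (1 + a))) \<le> sqrt (1 + a + u) + u"
proof -
  define t where "t = RN p (1 + a)"
  have "0 < u" "u \<le> 1/4"
    unfolding u_def using unit_roundoff_bounds[OF assms(1)] by simp_all
  have "\<bar>t - (1 + a)\<bar> \<le> u"
    unfolding t_def u_def using assms by (intro RN_abs_error_le_unit_roundoff) auto
  then have t: "1 + a - u \<le> t" "t \<le> 1 + a + u"
    by linarith+
  then have "0 \<le> sqrt t" "sqrt t \<le> 2"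
    using assms(2,3) \<open>u \<le> 1/4\<close> by (auto intro!: real_le_lsqrt)
  then have "\<bar>RN p (sqrt t) - sqrt t\<bar> \<le> u"
    unfolding u_def using assms(1) by (intro RN_abs_error_le_unit_roundoff) auto
  moreover have "sqrt (1 + a - u) \<le> sqrt t" "sqrt t \<le> sqrt (1 + a + u)"
    using t by simp_all
  ultimately show "sqrt (1 + a - u) - u \<le> RN p (sqrt (RN p (1 + a)))"
    "RN p (sqrt (RN p (1 + a))) \<le> sqrt (1 + a + u) + u"
    unfolding t_def by linarith+
qed

lemma RN_sqrt_RN_one_plus_RN_square_bounds:
  assumes "2 \<le> p" "\<bar>z\<bar> \<le> 1"
  defines "u \<equiv> unit_roundoff p" and "s \<equiv> RN p (sqrt (RN p (1 + (RN p z)^2)))"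
  shows "(2 + u - 2*u^2 - (1 + 2*u) * sqrt (1 + u)) * sqrt (1 + z^2) \<le> s"
    "s \<le> sqrt (1 + z^2) * (sqrt (1 + u) + u)"
proof -
  have "0 < u" "u \<le> 1/4"
    unfolding u_def using unit_roundoff_bounds[OF assms(1)] by simp_all
  note r = RN_square_bounds[OF assms(1,2), folded u_def]
  note s_bounds = RN_sqrt_RN_one_plus_bounds[OF assms(1) zero_le_power2 r(3), folded u_def s_def]
  have "(2 + u - 2*u^2 - (1 + 2*u) * sqrt (1 + u)) * sqrt (1 + z^2)
      \<le> sqrt (1 + z^2 / (1 + u)^2 - u) - u"
    using sqrt_perturbed_ge \<open>0 < u\<close> \<open>u \<le> 1/4\<close> by simp
  also have "\<dots> \<le> sqrt (1 + (RN p z)^2 - u) - u"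
    using r(1) by simp
  also have "\<dots> \<le> s"
    by (fact s_bounds(1))
  finally show "(2 + u - 2*u^2 - (1 + 2*u) * sqrt (1 + u)) * sqrt (1 + z^2) \<le> s" .
  have "s \<le> sqrt (1 + (RN p z)^2 + u) + u"
    by (fact s_bounds(2))
  also have "\<dots> \<le> sqrt (1 + (1 + 2*u) * z^2 + u) + u"
    using r(2) by simp
  also have "\<dots> \<le> sqrt (1 + z^2) * (sqrt (1 + u) + u)"
    using sqrt_perturbed_le \<open>0 < u\<close> by simp
  finally show "s \<le> sqrt (1 + z^2) * (sqrt (1 + u) + u)" .
qed

lemma RN_hypot_bounds:
  assumes "2 \<le> p" "0 < X" "\<bar>z\<bar> \<le> 1"
  defines "u \<equiv> unit_roundoff p" and "h \<equiv> sqrt (1 + z^2)"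
    and "\<rho> \<equiv> RN p (X * RN p (sqrt (RN p (1 + (RN p z)^2))))"
  shows "X * h * (1 - R5 u) \<le> \<rho>" "\<rho> \<le> X * h * (1 + R5 u)"
proof -
  define s where "s = RN p (sqrt (RN p (1 + (RN p z)^2)))"
  define w where "w = u / (1 + u)"
  have "0 < u"
    unfolding u_def using unit_roundoff_bounds[OF assms(1)] by simp
  note s_bounds = RN_sqrt_RN_one_plus_RN_square_bounds[OF assms(1,3), folded u_def s_def h_def]
  have "0 \<le> s"
    unfolding s_def using assms(1) by (simp add: RN_nonneg)
  have err: "\<bar>\<rho> - X * s\<bar> \<le> w * (X * s)"
    using RN_rel_error_le_unit_roundoff[OF assms(1), of "X * s"] \<open>0 \<le> s\<close> assms(2)
    unfolding \<rho>_def s_def w_def u_def by simp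
  have "X * h * (1 - R5 u) = X * h * ((2 + u - 2*u^2 - (1 + 2*u) * sqrt (1 + u)) * (1 - w))"
    unfolding w_def using R5_lower_eq[of u] \<open>0 < u\<close> by simp
  also have "\<dots> = (1 - w) * (X * ((2 + u - 2*u^2 - (1 + 2*u) * sqrt (1 + u)) * h))"
    by (simp only: mult_ac)
  also have "\<dots> \<le> (1 - w) * (X * s)"
    unfolding w_def using s_bounds(1) assms(2) \<open>0 < u\<close> by (intro mult_left_mono) simp_all
  also have "\<dots> \<le> \<rho>"
    using err by (simp add: algebra_simps)
  finally show "X * h * (1 - R5 u) \<le> \<rho>" .
  have "\<rho> \<le> (1 + w) * (X * s)"
    using err by (simp add: algebra_simps)
  also have "\<dots> \<le> (1 + w) * (X * (h * (sqrt (1 + u) + u)))"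
    unfolding w_def using s_bounds(2) assms(2) \<open>0 < u\<close>
    by (intro mult_left_mono) (simp_all add: add_pos_pos)
  also have "\<dots> = X * h * ((sqrt (1 + u) + u) * (1 + w))"
    by (simp only: mult_ac)
  also have "\<dots> = X * h * (1 + R5 u)"
    unfolding w_def using R5_upper_eq[of u] \<open>0 < u\<close> by simp
  finally show "\<rho> \<le> X * h * (1 + R5 u)" .
qed

lemma RN_hypot_rel_error:
  assumes "2 \<le> p" "0 < X" "\<bar>z\<bar> \<le> 1"
  shows "\<bar>RN p (X * RN p (sqrt (RN p (1 + (RN p z)^2)))) / (X * sqrt (1 + z^2)) - 1\<bar>
    \<le> R5 (unit_roundoff p)"
    (is "\<bar>?\<rho> / ?d - 1\<bar> \<le> ?R")
proof -
  have "0 < ?d"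
    using assms(2) by (simp add: add_pos_nonneg)
  with RN_hypot_bounds[OF assms] have "1 - ?R \<le> ?\<rho> / ?d" "?\<rho> / ?d \<le> 1 + ?R"
    by (simp_all add: pos_le_divide_eq pos_divide_le_eq mult.commute)
  then show ?thesis
    by linarith
qed

theorem theorem2:
  fixes p :: nat and emin emax :: int and x y :: real
  assumes hp: "p \<ge> 2"
    and hx: "is_float p emin emax x" and hy: "is_float p emin emax y"
    and hnz: "x \<noteq> 0 \<or> y \<noteq> 0"
    and hnuf: "let x' = (if \<bar>x\<bar> < \<bar>y\<bar> then y else x);
                   y' = (if \<bar>x\<bar> < \<bar>y\<bar> then x else y);
                   r = RN p (y' / x'); t = RN p (1 + r^2); s = RN p (sqrt t)
               in no_uf_of p emin emax (y' / x')
                  \<and> no_uf_of p emin emax (1 + r^2)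
                  \<and> no_uf_of p emin emax (sqrt t) \<and> no_uf_of p emin emax (\<bar>x'\<bar> * s)"
  shows "let u = (2::real) powr (- real p);
             x' = (if \<bar>x\<bar> < \<bar>y\<bar> then y else x);
             y' = (if \<bar>x\<bar> < \<bar>y\<bar> then x else y);
             r = RN p (y' / x'); t = RN p (1 + r^2); s = RN p (sqrt t);
             \<rho>2 = RN p (\<bar>x'\<bar> * s)
         in \<bar>\<rho>2 / sqrt (x^2 + y^2) - 1\<bar> \<le> R5 u \<and> R5 u \<le> 5/2 * u + 3/8 * u^2"
proof -
  \<comment> \<open>RN rounds into the format with unbounded exponent.\<close>
  define x' where "x' = (if \<bar>x\<bar> < \<bar>y\<bar> then y else x)"
  define y' where "y' = (if \<bar>x\<bar> < \<bar>y\<bar> then x else y)"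
  define z where "z = y' / x'"
  have "x' \<noteq> 0" "\<bar>y'\<bar> \<le> \<bar>x'\<bar>"
    unfolding x'_def y'_def using hnz by auto
  then have "\<bar>z\<bar> \<le> 1"
    unfolding z_def by (simp add: abs_divide divide_le_eq)
  have "x^2 + y^2 = x'^2 * (1 + z^2)"
    unfolding z_def x'_def y'_def using \<open>x' \<noteq> 0\<close>[unfolded x'_def]
    by (auto simp: field_simps)
  then have "sqrt (x^2 + y^2) = \<bar>x'\<bar> * sqrt (1 + z^2)"
    by (simp add: real_sqrt_mult)
  moreover have "\<bar>RN p (\<bar>x'\<bar> * RN p (sqrt (RN p (1 + (RN p z)^2)))) / (\<bar>x'\<bar> * sqrt (1 + z^2)) - 1\<bar>
      \<le> R5 (unit_roundoff p)"
    using RN_hypot_rel_error[OF hp _ \<open>\<bar>z\<bar> \<le> 1\<close>] \<open>x' \<noteq> 0\<close> by simp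
  moreover have "R5 (unit_roundoff p) \<le> 5/2 * unit_roundoff p + 3/8 * (unit_roundoff p)^2"
    using unit_roundoff_bounds[OF hp] by (intro R5_le) auto
  ultimately show ?thesis
    unfolding Let_def x'_def[symmetric] y'_def[symmetric] z_def[symmetric]
      unit_roundoff_def[symmetric]
    by simp
qed

end
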